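(* Let $X,Y$ be nonempty compact Hausdorff spaces, $E\neq\{0_E\}$ a complex locally convex space, and $T:C(X,E)\to C(Y,E)$ a map with $\operatorname{Ran}(TF-TG)\subset\operatorname{Ran}(F-G)$ for all $F,G\in C(X,E)$ and $T(1\otimes 0_E)=1\otimes 0_E$. Then for all $f,g\in C(X)$ and $u,v\in E$, $$T(f\otimes u+g\otimes v)=T(f\otimes u)+T(g\otimes v).$$
   Context: $C(X,E)$ is the vector space of continuous functions $X\to E$; $\operatorname{Ran}(F)=\{F(x):x\in X\}$; for $f\in C(X)$ and $u\in E$, $f\otimes u$ denotes $x\mapsto f(x)u$, and $1\otimes 0_E$ is the constant function with value $0_E$. *)

theory Defs
  imports "HOL-Analysis.Analysis"
begin

definition complex_convex :: "(complex \<Rightarrow> 'e::ab_group_add \<Rightarrow> 'e) \<Rightarrow> 'e set \<Rightarrow> bool" where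
  "complex_convex smul V \<longleftrightarrow>
     (\<forall>x\<in>V. \<forall>y\<in>V. \<forall>t::real. 0 \<le> t \<and> t \<le> 1 \<longrightarrow>
        smul (complex_of_real t) x + smul (complex_of_real (1 - t)) y \<in> V)"

definition complex_lcs :: "(complex \<Rightarrow> 'e::{ab_group_add, t2_space} \<Rightarrow> 'e) \<Rightarrow> bool" where
  "complex_lcs smul \<longleftrightarrow>
     vector_space smul \<and>
     continuous_on UNIV (\<lambda>(x::'e, y::'e). x + y) \<and>
     continuous_on UNIV (\<lambda>(c::complex, x::'e). smul c x) \<and>
     (\<forall>U. open U \<and> (0::'e) \<in> U \<longrightarrow>
        (\<exists>V. open V \<and> 0 \<in> V \<and> V \<subseteq> U \<and> complex_convex smul V))"

end

theory Submission
  imports Defs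
begin

text \<open>Fix a point y and a vector v \<noteq> 0. If u and v are linearly independent, the vectors
  T(f\<otimes>u + g\<otimes>v)(y), T(f\<otimes>u)(y) and T(g\<otimes>v)(y) are each pinned down in two ways by the
  range condition, and independence forces these to agree. If u = c v, everything lives on
  the line through v, and the coordinate h \<mapsto> \<psi>(h) of T(h\<otimes>v)(y) along v is a functional with
  \<psi>(h) - \<psi>(k) \<in> Ran(h - k). Such a functional is additive: on real-valued and on purely
  imaginary functions it takes real resp. imaginary values, which separates real and
  imaginary parts.\<close>

locale range_decreasing_functional =
  fixes \<psi> :: "('x::topological_space \<Rightarrow> complex) \<Rightarrow> complex"
  assumes diff_in_range: "\<And>h k. continuous_on UNIV h \<Longrightarrow> continuous_on UNIV k \<Longrightarrow>
      \<exists>x. \<psi> h - \<psi> k = h x - k x"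
    and zero: "\<psi> (\<lambda>x. 0) = 0"
begin

lemma value_in_range: "continuous_on UNIV h \<Longrightarrow> \<exists>x. \<psi> h = h x"
  using diff_in_range[of h "\<lambda>x. 0"] zero by simp

lemma real_value:
  assumes "continuous_on UNIV r"
  obtains x where "\<psi> (\<lambda>x. of_real (r x)) = of_real (r x)"
proof -
  have "continuous_on UNIV (\<lambda>x. complex_of_real (r x))" using assms by (intro continuous_intros)
  then show thesis using value_in_range that by blast
qed

lemma imaginary_value:
  assumes "continuous_on UNIV s"
  obtains x where "\<psi> (\<lambda>x. \<i> * of_real (s x)) = \<i> * of_real (s x)"
proof -
  have "continuous_on UNIV (\<lambda>x. \<i> * complex_of_real (s x))" using assms by (intro continuous_intros)
  then show thesis using value_in_range that by blast
qed

lemma add_real_imaginary: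
  assumes r: "continuous_on UNIV r" and s: "continuous_on UNIV s"
  shows "\<psi> (\<lambda>x. of_real (r x) + \<i> * of_real (s x))
           = \<psi> (\<lambda>x. of_real (r x)) + \<psi> (\<lambda>x. \<i> * of_real (s x))"
proof -
  let ?h = "\<lambda>x. of_real (r x) + \<i> * of_real (s x)"
  have ch: "continuous_on UNIV ?h"
    and cr: "continuous_on UNIV (\<lambda>x. complex_of_real (r x))"
    and cs: "continuous_on UNIV (\<lambda>x. \<i> * complex_of_real (s x))"
    using r s by (auto intro!: continuous_intros)
  obtain x1 where x1: "\<psi> ?h - \<psi> (\<lambda>x. of_real (r x)) = \<i> * of_real (s x1)"
    using diff_in_range[OF ch cr] by auto
  obtain x2 where x2: "\<psi> ?h - \<psi> (\<lambda>x. \<i> * of_real (s x)) = of_real (r x2)"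
    using diff_in_range[OF ch cs] by auto
  obtain x3 where x3: "\<psi> (\<lambda>x. of_real (r x)) = of_real (r x3)" using real_value[OF r] .
  obtain x4 where x4: "\<psi> (\<lambda>x. \<i> * of_real (s x)) = \<i> * of_real (s x4)" using imaginary_value[OF s] .
  have "r x3 = r x2" using x1 x2 x3 x4 by (simp add: complex_eq_iff algebra_simps)
  then show ?thesis using x2 x3 by (simp add: algebra_simps)
qed

lemma imaginary_scale:
  assumes s: "continuous_on UNIV s"
  shows "\<psi> (\<lambda>x. \<i> * of_real (s x)) = \<i> * \<psi> (\<lambda>x. of_real (s x))"
proof -
  have "continuous_on UNIV (\<lambda>x. \<i> * complex_of_real (s x))"
    and "continuous_on UNIV (\<lambda>x. complex_of_real (s x))"
    using s by (auto intro!: continuous_intros)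
  then obtain x1 where x1: "\<psi> (\<lambda>x. \<i> * of_real (s x)) - \<psi> (\<lambda>x. of_real (s x))
                             = \<i> * of_real (s x1) - of_real (s x1)"
    using diff_in_range by blast
  obtain x3 where x3: "\<psi> (\<lambda>x. of_real (s x)) = of_real (s x3)" using real_value[OF s] .
  obtain x4 where x4: "\<psi> (\<lambda>x. \<i> * of_real (s x)) = \<i> * of_real (s x4)" using imaginary_value[OF s] .
  have "s x3 = s x4" using x1 x3 x4 by (simp add: complex_eq_iff algebra_simps)
  then show ?thesis using x3 x4 by simp
qed

lemma decompose:
  assumes "continuous_on UNIV h"
  shows "\<psi> h = \<psi> (\<lambda>x. of_real (Re (h x))) + \<i> * \<psi> (\<lambda>x. of_real (Im (h x)))"
proof -
  have "h = (\<lambda>x. of_real (Re (h x)) + \<i> * of_real (Im (h x)))"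
    by (simp add: fun_eq_iff complex_eq_iff)
  moreover have "continuous_on UNIV (\<lambda>x. Re (h x))" "continuous_on UNIV (\<lambda>x. Im (h x))"
    using assms by (auto intro: continuous_intros)
  ultimately show ?thesis using add_real_imaginary imaginary_scale by metis
qed

lemma add_real:
  assumes r: "continuous_on UNIV r" and s: "continuous_on UNIV s"
  shows "\<psi> (\<lambda>x. of_real (r x + s x)) = \<psi> (\<lambda>x. of_real (r x)) + \<psi> (\<lambda>x. of_real (s x))"
proof -
  have crs: "continuous_on UNIV (\<lambda>x. r x + s x)" using r s by (intro continuous_intros)
  \<comment> \<open>compare with r + \<i>s, whose difference with r + s ranges over the line (1 - \<i>)\<real>\<close>
  have "continuous_on UNIV (\<lambda>x. complex_of_real (r x + s x))"
    and "continuous_on UNIV (\<lambda>x. complex_of_real (r x) + \<i> * complex_of_real (s x))"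
    using r s by (auto intro!: continuous_intros)
  from diff_in_range[OF this] obtain x1
    where x1: "\<psi> (\<lambda>x. of_real (r x + s x)) - \<psi> (\<lambda>x. of_real (r x) + \<i> * of_real (s x))
                 = of_real (s x1) - \<i> * of_real (s x1)"
    by (auto simp: algebra_simps)
  obtain x3 where x3: "\<psi> (\<lambda>x. of_real (r x)) = of_real (r x3)" using real_value[OF r] .
  obtain x4 where x4: "\<psi> (\<lambda>x. of_real (s x)) = of_real (s x4)" using real_value[OF s] .
  obtain x5 where x5: "\<psi> (\<lambda>x. of_real (r x + s x)) = of_real (r x5 + s x5)" using real_value[OF crs] .
  have "\<psi> (\<lambda>x. of_real (r x) + \<i> * of_real (s x)) = of_real (r x3) + \<i> * of_real (s x4)"
    using add_real_imaginary[OF r s] imaginary_scale[OF s] x3 x4 by simp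
  then show ?thesis using x1 x3 x4 x5 by (simp add: complex_eq_iff algebra_simps)
qed

lemma add:
  assumes a: "continuous_on UNIV a" and b: "continuous_on UNIV b"
  shows "\<psi> (\<lambda>x. a x + b x) = \<psi> a + \<psi> b"
proof -
  have cRe: "continuous_on UNIV (\<lambda>x. Re (h x))" and cIm: "continuous_on UNIV (\<lambda>x. Im (h x))"
    if "continuous_on UNIV h" for h :: "'x \<Rightarrow> complex"
    using that by (auto intro: continuous_intros)
  have "continuous_on UNIV (\<lambda>x. a x + b x)" using a b by (intro continuous_intros)
  then show ?thesis
    using decompose[OF a] decompose[OF b] decompose[of "\<lambda>x. a x + b x"]
      add_real[OF cRe[OF a] cRe[OF b]] add_real[OF cIm[OF a] cIm[OF b]]
    by (simp add: algebra_simps)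
qed

end

locale range_decreasing_map = vector_space smul
  for smul :: "complex \<Rightarrow> 'e::{ab_group_add, topological_space} \<Rightarrow> 'e" +
  fixes T :: "('x::topological_space \<Rightarrow> 'e) \<Rightarrow> ('y \<Rightarrow> 'e)"
  assumes continuous_add: "continuous_on UNIV (\<lambda>(x::'e, y). x + y)"
    and continuous_scale: "continuous_on UNIV (\<lambda>(c, x::'e). smul c x)"
    and diff_in_range: "\<And>F G. continuous_on UNIV F \<Longrightarrow> continuous_on UNIV G \<Longrightarrow>
      range (\<lambda>y. T F y - T G y) \<subseteq> range (\<lambda>x. F x - G x)"
    and T_zero: "T (\<lambda>x. 0) = (\<lambda>y. 0)"
begin

lemma continuous_on_scale_const:
  assumes "continuous_on UNIV h"
  shows "continuous_on UNIV (\<lambda>x. smul (h x) w)"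
proof -
  have "continuous_on UNIV (\<lambda>x. (h x, w))" using assms by (intro continuous_intros)
  then have "continuous_on UNIV ((\<lambda>(c, x). smul c x) \<circ> (\<lambda>x. (h x, w)))"
    by (rule continuous_on_compose) (rule continuous_on_subset[OF continuous_scale], simp)
  then show ?thesis by (simp add: o_def)
qed

lemma continuous_on_add':
  fixes F G :: "'a::topological_space \<Rightarrow> 'e"
  assumes "continuous_on UNIV F" "continuous_on UNIV G"
  shows "continuous_on UNIV (\<lambda>x. F x + G x)"
proof -
  have "continuous_on UNIV (\<lambda>x. (F x, G x))" using assms by (intro continuous_intros)
  then have "continuous_on UNIV ((\<lambda>(x, y). x + y) \<circ> (\<lambda>x. (F x, G x)))"
    by (rule continuous_on_compose) (rule continuous_on_subset[OF continuous_add], simp)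
  then show ?thesis by (simp add: o_def)
qed

lemma diff_value:
  "continuous_on UNIV F \<Longrightarrow> continuous_on UNIV G \<Longrightarrow> \<exists>x. T F y - T G y = F x - G x"
  using diff_in_range by blast

lemma value_in_range: "continuous_on UNIV F \<Longrightarrow> \<exists>x. T F y = F x"
  using diff_value[of F "\<lambda>x. 0" y] T_zero by simp

lemma additive_on_line:
  assumes v: "v \<noteq> 0" and h: "continuous_on UNIV h" and k: "continuous_on UNIV k"
  shows "T (\<lambda>x. smul (h x + k x) v) y = T (\<lambda>x. smul (h x) v) y + T (\<lambda>x. smul (k x) v) y"
proof -
  define \<psi> where "\<psi> h = (THE c. T (\<lambda>x. smul (h x) v) y = smul c v)" for h
  have coord: "T (\<lambda>x. smul (h x) v) y = smul (\<psi> h) v" if ch: "continuous_on UNIV h" for h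
  proof -
    obtain x where x: "T (\<lambda>x. smul (h x) v) y = smul (h x) v"
      using value_in_range[OF continuous_on_scale_const[OF ch]] by blast
    have "\<psi> h = h x" unfolding \<psi>_def by (rule the_equality) (use x v in auto)
    then show ?thesis using x by simp
  qed
  interpret range_decreasing_functional \<psi>
  proof
    fix h k :: "'x \<Rightarrow> complex"
    assume ch: "continuous_on UNIV h" and ck: "continuous_on UNIV k"
    obtain x where "T (\<lambda>x. smul (h x) v) y - T (\<lambda>x. smul (k x) v) y = smul (h x) v - smul (k x) v"
      using diff_value[OF continuous_on_scale_const[OF ch] continuous_on_scale_const[OF ck]] by blast
    then have "smul (\<psi> h - \<psi> k) v = smul (h x - k x) v"
      using coord[OF ch] coord[OF ck] by (simp add: scale_left_diff_distrib)
    then show "\<exists>x. \<psi> h - \<psi> k = h x - k x" using v by auto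
  next
    show "\<psi> (\<lambda>x. 0) = 0" using coord[of "\<lambda>x. 0"] T_zero v by simp
  qed
  have "continuous_on UNIV (\<lambda>x. h x + k x)" using h k by (intro continuous_intros)
  then have "T (\<lambda>x. smul (h x + k x) v) y = smul (\<psi> h + \<psi> k) v"
    using coord add[OF h k] by presburger
  then show ?thesis using coord[OF h] coord[OF k] by (simp add: scale_left_distrib)
qed

lemma additive_independent:
  assumes indep: "\<And>a b. smul a u = smul b v \<Longrightarrow> a = 0"
    and f: "continuous_on UNIV f" and g: "continuous_on UNIV g"
  shows "T (\<lambda>x. smul (f x) u + smul (g x) v) y = T (\<lambda>x. smul (f x) u) y + T (\<lambda>x. smul (g x) v) y"
proof -
  let ?F = "\<lambda>x. smul (f x) u" and ?G = "\<lambda>x. smul (g x) v"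
  have cF: "continuous_on UNIV ?F" and cG: "continuous_on UNIV ?G"
    using f g by (auto intro: continuous_on_scale_const)
  have cFG: "continuous_on UNIV (\<lambda>x. ?F x + ?G x)" using continuous_on_add'[OF cF cG] .
  obtain x1 where x1: "T (\<lambda>x. ?F x + ?G x) y - T ?F y = smul (g x1) v"
    using diff_value[OF cFG cF] by auto
  obtain x2 where x2: "T (\<lambda>x. ?F x + ?G x) y - T ?G y = smul (f x2) u"
    using diff_value[OF cFG cG] by auto
  obtain x3 where x3: "T ?F y = smul (f x3) u" using value_in_range[OF cF] by auto
  obtain x4 where x4: "T ?G y = smul (g x4) v" using value_in_range[OF cG] by auto
  have "smul (f x3) u + smul (g x1) v = smul (f x2) u + smul (g x4) v"
    using x1 x2 x3 x4 by (simp add: algebra_simps)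
  then have "smul (f x3 - f x2) u = smul (g x4 - g x1) v"
    by (simp add: scale_left_diff_distrib algebra_simps)
  then have "f x3 = f x2" using indep by fastforce
  then show ?thesis using x2 x3 x4 by (simp add: algebra_simps)
qed

end

theorem lemma4p4:
  fixes smul :: "complex \<Rightarrow> 'e::{ab_group_add, t2_space} \<Rightarrow> 'e"
    and T :: "('x::t2_space \<Rightarrow> 'e) \<Rightarrow> ('y::t2_space \<Rightarrow> 'e)"
  assumes cX: "compact (UNIV :: 'x set)"
    and cY: "compact (UNIV :: 'y set)"
    and E: "complex_lcs smul"
    and nontriv: "\<exists>w::'e. w \<noteq> 0"
    and Tmaps: "\<And>F. continuous_on UNIV F \<Longrightarrow> continuous_on UNIV (T F)"
    and Tran: "\<And>F G. continuous_on UNIV F \<Longrightarrow> continuous_on UNIV G \<Longrightarrow>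
                 range (\<lambda>y. T F y - T G y) \<subseteq> range (\<lambda>x. F x - G x)"
    and T0: "T (\<lambda>x. 0) = (\<lambda>y. 0)"
    and f: "continuous_on UNIV (f :: 'x \<Rightarrow> complex)"
    and g: "continuous_on UNIV (g :: 'x \<Rightarrow> complex)"
  shows "T (\<lambda>x. smul (f x) u + smul (g x) v)
           = (\<lambda>y. T (\<lambda>x. smul (f x) u) y + T (\<lambda>x. smul (g x) v) y)"
proof
  interpret range_decreasing_map smul T
    using E Tran T0
    by (simp add: complex_lcs_def range_decreasing_map_def range_decreasing_map_axioms_def)
  fix y
  consider "v = 0" | c where "v \<noteq> 0" "u = smul c v" | "v \<noteq> 0" "\<forall>c. u \<noteq> smul c v" by blast
  then show "T (\<lambda>x. smul (f x) u + smul (g x) v) y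
               = T (\<lambda>x. smul (f x) u) y + T (\<lambda>x. smul (g x) v) y"
  proof cases
    case 1
    then show ?thesis using T0 by simp
  next
    case (2 c)
    have "continuous_on UNIV (\<lambda>x. f x * c)" using f by (intro continuous_intros)
    then show ?thesis using additive_on_line[OF 2(1) _ g] 2(2) by (simp add: scale_left_distrib)
  next
    case 3
    have "a = 0" if "smul a u = smul b v" for a b
    proof (rule ccontr)
      assume "a \<noteq> 0"
      then have "u = smul (inverse a * b) v" using arg_cong[OF that, of "smul (inverse a)"] by simp
      then show False using 3(2) by blast
    qed
    then show ?thesis using additive_independent f g by blast
  qed
qed

end
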